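(* Let $N=\{1,\dots,n\}$ be any set of agents and $M$ a set of $m$ chores with $m\le n+2$, where each agent $i$ has a normalized monotone cost function $c_i:2^M\to\mathbb{R}_{\ge0}$. Then an EFX allocation exists.
   Context: A cost function $c_i$ is normalized if $c_i(\emptyset)=0$ and monotone if $c_i(S\cup\{e\})\ge c_i(S)$ for all $S\subseteq M$, $e\in M$. An allocation is a partition $X=(X_1,\dots,X_n)$ of $M$ into $n$ (possibly empty) bundles, agent $i$ receiving $X_i$. $X$ is EFX if for all agents $i,j$ and every chore $e\in X_i$, $c_i(X_i\setminus\{e\})\le c_i(X_j)$. *)

theory Defs
  imports Complex_Main
begin

definition normalized_cost :: "'b set \<Rightarrow> ('b set \<Rightarrow> real) \<Rightarrow> bool" where
  "normalized_cost M c \<longleftrightarrow> c {} = 0"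

definition monotone_cost :: "'b set \<Rightarrow> ('b set \<Rightarrow> real) \<Rightarrow> bool" where
  "monotone_cost M c \<longleftrightarrow> (\<forall>S e. S \<subseteq> M \<longrightarrow> e \<in> M \<longrightarrow> c (S \<union> {e}) \<ge> c S)"

definition nonneg_cost :: "'b set \<Rightarrow> ('b set \<Rightarrow> real) \<Rightarrow> bool" where
  "nonneg_cost M c \<longleftrightarrow> (\<forall>S. S \<subseteq> M \<longrightarrow> c S \<ge> 0)"

definition is_allocation :: "nat set \<Rightarrow> 'b set \<Rightarrow> (nat \<Rightarrow> 'b set) \<Rightarrow> bool" where
  "is_allocation N M X \<longleftrightarrow>
     (\<forall>i\<in>N. X i \<subseteq> M) \<and> (\<Union>i\<in>N. X i) = M \<and>
     (\<forall>i\<in>N. \<forall>j\<in>N. i \<noteq> j \<longrightarrow> X i \<inter> X j = {})"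

definition EFX :: "nat set \<Rightarrow> (nat \<Rightarrow> 'b set \<Rightarrow> real) \<Rightarrow> (nat \<Rightarrow> 'b set) \<Rightarrow> bool" where
  "EFX N c X \<longleftrightarrow> (\<forall>i\<in>N. \<forall>j\<in>N. \<forall>e\<in>X i. c i (X i - {e}) \<le> c i (X j))"

end

theory Submission
  imports Defs
begin

(* With at most n chores every agent gets at most one, and EFX holds trivially. Otherwise
   the one or two surplus chores are absorbed by agents holding two or three chores, while
   every other agent gets a single chore; the holder of a bundle B is EFX as soon as B minus
   any chore costs it no more than every other bundle and every remaining single chore.
   For m = n + 1 one agent takes its two cheapest chores. For m = n + 2 compare the three
   cheapest chores of two agents i and j. If they differ, the chains of cheapest chores of
   i and j contain two disjoint pairs, each made of chores that are cheap for its holder.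
   If they coincide in W, either i can take W, or i's fourth cheapest chore a costs i less
   than W - {e} for some e; then i takes {e, a} and j the rest of W. *)

abbreviation admissible_costs :: "nat set \<Rightarrow> 'b set \<Rightarrow> (nat \<Rightarrow> 'b set \<Rightarrow> real) \<Rightarrow> bool" where
  "admissible_costs N M c \<equiv>
     \<forall>i\<in>N. normalized_cost M (c i) \<and> monotone_cost M (c i) \<and> nonneg_cost M (c i)"

definition cheapest :: "('b set \<Rightarrow> real) \<Rightarrow> 'b set \<Rightarrow> 'b set \<Rightarrow> bool" where
  "cheapest f M T \<longleftrightarrow> T \<subseteq> M \<and> (\<forall>x\<in>T. \<forall>y\<in>M - T. f {x} \<le> f {y})"

(* For a two-chore bundle P this is EFX of its holder towards the holder of Q and towards
   every holder of a single remaining chore. *)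
definition singletons_cheaper ::
    "('b set \<Rightarrow> real) \<Rightarrow> 'b set \<Rightarrow> 'b set \<Rightarrow> 'b set \<Rightarrow> bool" where
  "singletons_cheaper f M P Q \<longleftrightarrow>
     (\<forall>x\<in>P. f {x} \<le> f Q \<and> (\<forall>r\<in>M - (P \<union> Q). f {x} \<le> f {r}))"

lemma monotone_cost_subset:
  assumes "monotone_cost M f" "finite T" "S \<subseteq> T" "T \<subseteq> M"
  shows "f S \<le> f T"
proof -
  have "f S \<le> f (S \<union> D)" if "finite D" "D \<subseteq> M" for D
    using that
  proof (induction D rule: finite_induct)
    case (insert x D)
    then have "S \<union> D \<subseteq> M" "x \<in> M" using assms(3,4) by auto
    then have "f (S \<union> D) \<le> f (S \<union> D \<union> {x})" using assms(1) by (simp add: monotone_cost_def)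
    then show ?case using insert by simp
  qed simp
  from this[of "T - S"] show ?thesis using assms(2-4) by (auto simp: Un_absorb1)
qed

lemma card_2_Diff_singleton:
  assumes "card P = 2" "e \<in> P"
  obtains x where "x \<in> P" "P - {e} = {x}"
proof -
  obtain a b where "P = {a, b}" "a \<noteq> b" using assms(1) by (auto simp: card_2_iff)
  then show ?thesis using that assms(2) by auto
qed

lemma cheapest_chain:
  assumes "finite M"
  obtains T where "\<And>k. cheapest f M (T k)" "\<And>k. k \<le> card M \<Longrightarrow> card (T k) = k"
    "\<And>k l. k \<le> l \<Longrightarrow> T k \<subseteq> T l"
proof -
  obtain xs where xs: "distinct xs" "set xs = M" using finite_distinct_list[OF assms] by blast
  define L where "L = sort_key (\<lambda>x. f {x}) xs"
  have L: "distinct L" "set L = M" "sorted (map (\<lambda>x. f {x}) L)" using xs by (simp_all add: L_def)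
  have prefix: "cheapest f M (set (take k L))" for k
    unfolding cheapest_def
  proof (intro conjI ballI)
    show "set (take k L) \<subseteq> M" using set_take_subset[of k L] unfolding L(2) .
    fix x y assume x: "x \<in> set (take k L)" and y: "y \<in> M - set (take k L)"
    obtain p where p: "p < min (length L) k" "x = L ! p"
      using x by (metis in_set_conv_nth length_take nth_take min_less_iff_conj)
    obtain q where q: "q < length L" "y = L ! q"
      using y unfolding L(2)[symmetric] by (metis DiffE in_set_conv_nth)
    have "k \<le> q"
    proof (rule ccontr)
      assume "\<not> k \<le> q"
      then have "y \<in> set (take k L)"
        using q by (metis in_set_conv_nth length_take min_less_iff_conj not_le nth_take)
      with y show False by simp
    qed
    then show "f {x} \<le> f {y}"
      using sorted_nth_mono[OF L(3), of p q] p q by simp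
  qed
  have "card (set (take k L)) = k" if "k \<le> card M" for k
    using that L(1,2) distinct_card[of "take k L"] distinct_card[of L] by simp
  moreover have "set (take k L) \<subseteq> set (take l L)" if "k \<le> l" for k l
    using that by (rule set_take_subset_set_take)
  ultimately show ?thesis using that[of "\<lambda>k. set (take k L)"] prefix by blast
qed

definition extend_by_singletons ::
    "nat set \<Rightarrow> (nat \<Rightarrow> 'b set) \<Rightarrow> (nat \<Rightarrow> 'b) \<Rightarrow> nat \<Rightarrow> 'b set" where
  "extend_by_singletons K Y h k = (if k \<in> K then Y k else {h k})"

lemma is_allocation_extend_by_singletons:
  assumes KN: "K \<subseteq> N" and YM: "\<forall>k\<in>K. Y k \<subseteq> M"
    and disj: "\<forall>k\<in>K. \<forall>l\<in>K. k \<noteq> l \<longrightarrow> Y k \<inter> Y l = {}"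
    and h: "bij_betw h (N - K) (M - (\<Union>k\<in>K. Y k))"
  shows "is_allocation N M (extend_by_singletons K Y h)"
  unfolding is_allocation_def
proof (intro conjI ballI impI)
  let ?X = "extend_by_singletons K Y h"
  have hR: "h k \<in> M - (\<Union>k\<in>K. Y k)" if "k \<in> N - K" for k using h that bij_betwE by blast
  show XM: "?X k \<subseteq> M" if "k \<in> N" for k
    using that YM hR by (auto simp: extend_by_singletons_def)
  show "(\<Union>k\<in>N. ?X k) = M"
  proof
    show "M \<subseteq> (\<Union>k\<in>N. ?X k)"
    proof
      fix x assume x: "x \<in> M"
      show "x \<in> (\<Union>k\<in>N. ?X k)"
      proof (cases "x \<in> (\<Union>k\<in>K. Y k)")
        case True
        then obtain k where "k \<in> K" "x \<in> Y k" by blast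
        then show ?thesis using KN by (auto simp: extend_by_singletons_def)
      next
        case False
        then obtain k where "k \<in> N - K" "h k = x" using h x by (metis DiffI bij_betw_def imageE)
        then show ?thesis by (auto simp: extend_by_singletons_def)
      qed
    qed
  qed (use XM in blast)
  fix i j assume ij: "i \<in> N" "j \<in> N" "i \<noteq> j"
  have "h i \<noteq> h j" if "i \<notin> K" "j \<notin> K"
    using h ij that unfolding bij_betw_def inj_on_def by blast
  then show "?X i \<inter> ?X j = {}"
    using disj ij hR[of i] hR[of j] by (auto simp: extend_by_singletons_def)
qed

lemma EFX_exists_from_partial:
  assumes finM: "finite M" and finN: "finite N" and KN: "K \<subseteq> N"
    and YM: "\<forall>k\<in>K. Y k \<subseteq> M"
    and disj: "\<forall>k\<in>K. \<forall>l\<in>K. k \<noteq> l \<longrightarrow> Y k \<inter> Y l = {}"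
    and card_rest: "card (M - (\<Union>k\<in>K. Y k)) = card (N - K)"
    and costs: "admissible_costs N M c"
    and EFX_K: "\<forall>k\<in>K. \<forall>e\<in>Y k. \<forall>l\<in>K. l \<noteq> k \<longrightarrow> c k (Y k - {e}) \<le> c k (Y l)"
    and EFX_rest: "\<forall>k\<in>K. \<forall>e\<in>Y k. \<forall>r\<in>M - (\<Union>k\<in>K. Y k). c k (Y k - {e}) \<le> c k {r}"
  shows "\<exists>X. is_allocation N M X \<and> EFX N c X"
proof -
  obtain h where h: "bij_betw h (N - K) (M - (\<Union>k\<in>K. Y k))"
    using finite_same_card_bij[of "N - K" "M - (\<Union>k\<in>K. Y k)"] card_rest finN finM by auto
  define X where "X = extend_by_singletons K Y h"
  have alloc: "is_allocation N M X"
    unfolding X_def by (rule is_allocation_extend_by_singletons[OF KN YM disj h])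
  then have XM: "X k \<subseteq> M" if "k \<in> N" for k using that by (simp add: is_allocation_def)
  have "c i (X i - {e}) \<le> c i (X j)" if i: "i \<in> N" and j: "j \<in> N" and e: "e \<in> X i" for i j e
  proof -
    consider "i \<notin> K" | "j = i" | "i \<in> K" "j \<in> K" "j \<noteq> i" | "i \<in> K" "j \<notin> K" by blast
    then show ?thesis
    proof cases
      case 1
      then have "X i - {e} = {}" using e by (auto simp: X_def extend_by_singletons_def)
      then have "c i (X i - {e}) = 0" using costs i unfolding normalized_cost_def by metis
      then show ?thesis using costs i XM[OF j] by (simp add: nonneg_cost_def)
    next
      case 2
      then show ?thesis
        using monotone_cost_subset[of M "c i" "X i" "X i - {e}"] costs i XM[OF i] finM
        by (auto intro: finite_subset)
    next
      case 3
      then show ?thesis using EFX_K e by (auto simp: X_def extend_by_singletons_def)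
    next
      case 4
      then have "h j \<in> M - (\<Union>k\<in>K. Y k)" using h j bij_betwE by blast
      then show ?thesis using 4 EFX_rest e by (auto simp: X_def extend_by_singletons_def)
    qed
  qed
  with alloc show ?thesis unfolding EFX_def by blast
qed

lemma EFX_exists_card_le:
  assumes "finite M" "finite N" "card M \<le> card N"
    and costs: "admissible_costs N M c"
  shows "\<exists>X. is_allocation N M X \<and> EFX N c X"
proof -
  obtain h where h: "inj_on h M" "h ` M \<subseteq> N" using card_le_inj assms(1-3) by blast
  \<comment> \<open>the agents left without a chore form the partial allocation, with empty bundles\<close>
  have "card (h ` M) = card M" using card_image[OF h(1)] .
  then have "card (M - {}) = card (N - (N - h ` M))"
    using h(2) by (simp add: Diff_Diff_Int Int_absorb1)
  then show ?thesis
    by (intro EFX_exists_from_partial[where K = "N - h ` M" and Y = "\<lambda>_. {}"])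
       (use assms in auto)
qed

lemma EFX_exists_one_bundle:
  assumes "finite M" "finite N" "i \<in> N" "A \<subseteq> M" "card (M - A) = card N - 1"
    and costs: "admissible_costs N M c"
    and "\<forall>e\<in>A. \<forall>r\<in>M - A. c i (A - {e}) \<le> c i {r}"
  shows "\<exists>X. is_allocation N M X \<and> EFX N c X"
proof (rule EFX_exists_from_partial[where K = "{i}" and Y = "\<lambda>_. A"])
  show "card (M - (\<Union>k\<in>{i}. A)) = card (N - {i})" using assms(2,3,5) by simp
qed (use assms in auto)

lemma EFX_exists_two_pairs:
  assumes "finite M" "finite N" "i \<in> N" "j \<in> N" "i \<noteq> j" "card M = card N + 2"
    and costs: "admissible_costs N M c"
    and "P \<subseteq> M" "Q \<subseteq> M" "card P = 2" "card Q = 2" "P \<inter> Q = {}"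
    and "singletons_cheaper (c i) M P Q" "singletons_cheaper (c j) M Q P"
  shows "\<exists>X. is_allocation N M X \<and> EFX N c X"
proof -
  define Y where "Y k = (if k = i then P else Q)" for k
  have PQ: "(\<Union>k\<in>{i, j}. Y k) = P \<union> Q" using assms(5) by (auto simp: Y_def)
  have "finite (P \<union> Q)" using assms(1,8,9) by (simp add: finite_subset)
  moreover have "card (P \<union> Q) = 4" using assms(1,8-12) by (simp add: card_Un_disjoint finite_subset)
  ultimately have card_rest: "card (M - (\<Union>k\<in>{i, j}. Y k)) = card (N - {i, j})"
    unfolding PQ using assms(3-6,8,9) by (simp add: card_Diff_subset)
  have bound: "c k (Y k - {e}) \<le> c k (Y l) \<and> (\<forall>r\<in>M - (P \<union> Q). c k (Y k - {e}) \<le> c k {r})"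
    if "k \<in> {i, j}" "l \<in> {i, j}" "l \<noteq> k" and e: "e \<in> Y k" for k l e
  proof -
    have "card (Y k) = 2" using assms(10,11) by (simp add: Y_def)
    then obtain x where "x \<in> Y k" "Y k - {e} = {x}"
      using card_2_Diff_singleton e by metis
    then show ?thesis using that assms(5,13,14) by (auto simp: Y_def singletons_cheaper_def)
  qed
  show ?thesis
  proof (rule EFX_exists_from_partial[where K = "{i, j}" and Y = Y, OF _ _ _ _ _ card_rest])
    show "\<forall>k\<in>{i, j}. \<forall>e\<in>Y k. \<forall>l\<in>{i, j}. l \<noteq> k \<longrightarrow> c k (Y k - {e}) \<le> c k (Y l)"
      using bound by simp
    show "\<forall>k\<in>{i, j}. \<forall>e\<in>Y k. \<forall>r\<in>M - (\<Union>k\<in>{i, j}. Y k). c k (Y k - {e}) \<le> c k {r}"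
      unfolding PQ
    proof (intro ballI)
      fix k e r assume k: "k \<in> {i, j}" and "e \<in> Y k" "r \<in> M - (P \<union> Q)"
      moreover obtain l where "l \<in> {i, j}" "l \<noteq> k" using k assms(5) by blast
      ultimately show "c k (Y k - {e}) \<le> c k {r}" using bound by blast
    qed
  qed (use assms in \<open>auto simp: Y_def\<close>)
qed

lemma singletons_cheaper_if_cheapest:
  assumes "monotone_cost M f" "finite M" "cheapest f M D"
    and "P \<subseteq> D" "D \<subseteq> P \<union> Q" "\<not> Q \<subseteq> D" "Q \<subseteq> M"
  shows "singletons_cheaper f M P Q"
  unfolding singletons_cheaper_def
proof (intro ballI conjI)
  fix x assume "x \<in> P"
  then have x: "x \<in> D" using assms(4) by blast
  obtain y where y: "y \<in> Q" "y \<notin> D" using assms(6) by blast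
  have "f {x} \<le> f {y}" using assms(3,7) x y unfolding cheapest_def by blast
  also have "\<dots> \<le> f Q"
    using monotone_cost_subset[OF assms(1)] assms(2,7) y by (simp add: finite_subset)
  finally show "f {x} \<le> f Q" .
  fix r assume "r \<in> M - (P \<union> Q)"
  then show "f {x} \<le> f {r}" using assms(3,5) x unfolding cheapest_def by blast
qed

lemma split_two_common:
  assumes "card A = 3" "card B = 3" "card (A \<inter> B) = 2"
  obtains P Q where "card P = 2" "card Q = 2" "P \<inter> Q = {}" "P \<subseteq> A" "Q \<subseteq> B"
    "A \<union> B = P \<union> Q" "\<not> P \<subseteq> B" "\<not> Q \<subseteq> A"
proof -
  have fin: "finite A" "finite B" using assms(1,2) by (auto intro: card_ge_0_finite)
  obtain x y where xy: "A \<inter> B = {x, y}" "x \<noteq> y" using assms(3) by (auto simp: card_2_iff)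
  have "card (A - B) = 1" "card (B - A) = 1"
    using fin assms card_Diff_subset_Int[of A B] card_Diff_subset_Int[of B A]
    by (simp_all add: Int_commute)
  then obtain a b where "A - B = {a}" "B - A = {b}" by (auto simp: card_1_singleton_iff)
  then have AB: "A = {x, y, a}" "B = {x, y, b}" "a \<notin> B" "b \<notin> A" using xy by blast+
  show ?thesis
  proof (rule that[of "{x, a}" "{y, b}"])
    show "A \<union> B = {x, a} \<union> {y, b}" using AB(1,2) by blast
  qed (use AB xy in auto)
qed

(* A2 \<subseteq> A3 and B2 \<subseteq> B3 stand for the two and three cheapest chores of two agents. *)
lemma disjoint_pairs_from_chains:
  assumes "card A2 = 2" "A2 \<subseteq> A3" "card A3 = 3" "card B2 = 2" "B2 \<subseteq> B3" "card B3 = 3" "A3 \<noteq> B3"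
  obtains P Q where "card P = 2" "card Q = 2" "P \<inter> Q = {}" "P \<union> Q \<subseteq> A3 \<union> B3"
    "\<exists>D\<in>{A2, A3}. P \<subseteq> D \<and> D \<subseteq> P \<union> Q \<and> \<not> Q \<subseteq> D"
    "\<exists>D\<in>{B2, B3}. Q \<subseteq> D \<and> D \<subseteq> P \<union> Q \<and> \<not> P \<subseteq> D"
proof -
  have fin: "finite A3" "finite B3" using assms(3,6) by (auto intro: card_ge_0_finite)
  have "\<not> A3 \<subseteq> B3" using card_subset_eq[of B3 A3] fin assms(3,6,7) by auto
  then have "A3 \<inter> B3 \<subset> A3" by blast
  from psubset_card_mono[OF fin(1) this] have "card (A3 \<inter> B3) < 3" using assms(3) by simp
  then consider "A2 \<inter> B2 = {}" | "card (A3 \<inter> B3) = 2" | "A2 \<inter> B2 \<noteq> {}" "card (A3 \<inter> B3) \<le> 1"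
    by linarith
  then show ?thesis
  proof cases
    case 1
    have "A2 \<noteq> {}" "B2 \<noteq> {}" using assms(1,4) by auto
    show ?thesis
    proof (rule that[of A2 B2])
      show "\<exists>D\<in>{A2, A3}. A2 \<subseteq> D \<and> D \<subseteq> A2 \<union> B2 \<and> \<not> B2 \<subseteq> D"
        using 1 \<open>B2 \<noteq> {}\<close> by (intro bexI[of _ A2]) auto
      show "\<exists>D\<in>{B2, B3}. B2 \<subseteq> D \<and> D \<subseteq> A2 \<union> B2 \<and> \<not> A2 \<subseteq> D"
        using 1 \<open>A2 \<noteq> {}\<close> by (intro bexI[of _ B2]) auto
    qed (use 1 assms in auto)
  next
    case 2
    obtain P Q where PQ: "card P = 2" "card Q = 2" "P \<inter> Q = {}" "P \<subseteq> A3" "Q \<subseteq> B3"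
      "A3 \<union> B3 = P \<union> Q" "\<not> P \<subseteq> B3" "\<not> Q \<subseteq> A3"
      by (rule split_two_common[OF assms(3,6) 2])
    show ?thesis
    proof (rule that[OF PQ(1-3)])
      show "\<exists>D\<in>{A2, A3}. P \<subseteq> D \<and> D \<subseteq> P \<union> Q \<and> \<not> Q \<subseteq> D"
        using PQ(4,6,8) by (intro bexI[of _ A3]) auto
      show "\<exists>D\<in>{B2, B3}. Q \<subseteq> D \<and> D \<subseteq> P \<union> Q \<and> \<not> P \<subseteq> D"
        using PQ(5,6,7) by (intro bexI[of _ B3]) auto
    qed (use PQ(6) in auto)
  next
    case 3
    have "A2 \<inter> B2 \<subseteq> A3 \<inter> B3" using assms(2,5) by blast
    then have "card (A3 \<inter> B3) = 1" using 3 fin by (auto simp: le_Suc_eq)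
    then obtain u where u: "A3 \<inter> B3 = {u}" by (auto simp: card_1_singleton_iff)
    then have "u \<in> A2" "u \<in> B3" using 3 \<open>A2 \<inter> B2 \<subseteq> A3 \<inter> B3\<close> by auto
    define Q where "Q = B3 - {u}"
    have "card Q = 2" using assms(6) fin \<open>u \<in> B3\<close> by (simp add: Q_def)
    then have "Q \<noteq> {}" by auto
    have disj: "A2 \<inter> Q = {}" using u assms(2) by (auto simp: Q_def)
    have "\<not> A2 \<subseteq> B3"
    proof
      assume "A2 \<subseteq> B3"
      then have "A2 \<subseteq> {u}" using u assms(2) by blast
      then show False using assms(1) card_mono[of "{u}" A2] by simp
    qed
    show ?thesis
    proof (rule that[of A2 Q])
      show "\<exists>D\<in>{A2, A3}. A2 \<subseteq> D \<and> D \<subseteq> A2 \<union> Q \<and> \<not> Q \<subseteq> D"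
        using disj \<open>Q \<noteq> {}\<close> by (intro bexI[of _ A2]) auto
      show "\<exists>D\<in>{B2, B3}. Q \<subseteq> D \<and> D \<subseteq> A2 \<union> Q \<and> \<not> A2 \<subseteq> D"
        using \<open>u \<in> A2\<close> \<open>\<not> A2 \<subseteq> B3\<close> by (intro bexI[of _ B3]) (auto simp: Q_def)
    qed (use assms(1,2) \<open>card Q = 2\<close> disj in \<open>auto simp: Q_def\<close>)
  qed
qed

lemma EFX_exists_swap_fourth_cheapest:
  assumes finM: "finite M" and finN: "finite N" and ij: "i \<in> N" "j \<in> N" "i \<noteq> j"
    and card_M: "card M = card N + 2"
    and costs: "admissible_costs N M c"
    and W_i: "cheapest (c i) M W" and Wa_i: "cheapest (c i) M (insert a W)"
    and W_j: "cheapest (c j) M W"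
    and "a \<notin> W" "card W = 3" "e \<in> W" and a_cheap: "c i {a} < c i (W - {e})"
  shows "\<exists>X. is_allocation N M X \<and> EFX N c X"
proof (rule EFX_exists_two_pairs[OF finM finN ij card_M costs, of "{e, a}" "W - {e}"])
  have "insert a W \<subseteq> M" using Wa_i by (simp add: cheapest_def)
  then show "{e, a} \<subseteq> M" "W - {e} \<subseteq> M" using \<open>e \<in> W\<close> by auto
  have "e \<noteq> a" using \<open>e \<in> W\<close> \<open>a \<notin> W\<close> by blast
  then show "card {e, a} = 2" by simp
  show "card (W - {e}) = 2" using \<open>card W = 3\<close> \<open>e \<in> W\<close> by (simp add: card_ge_0_finite)
  show "{e, a} \<inter> (W - {e}) = {}" using \<open>a \<notin> W\<close> by auto
  have union: "{e, a} \<union> (W - {e}) = insert a W" using \<open>e \<in> W\<close> by auto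
  have "c i {e} \<le> c i {a}"
    using W_i \<open>e \<in> W\<close> \<open>a \<notin> W\<close> \<open>insert a W \<subseteq> M\<close>
    unfolding cheapest_def by blast
  then show "singletons_cheaper (c i) M {e, a} (W - {e})"
    unfolding singletons_cheaper_def union using Wa_i a_cheap \<open>e \<in> W\<close>
    unfolding cheapest_def by auto
  show "singletons_cheaper (c j) M (W - {e}) {e, a}"
    by (rule singletons_cheaper_if_cheapest[OF _ finM W_j])
       (use costs ij \<open>e \<in> W\<close> \<open>a \<notin> W\<close> \<open>{e, a} \<subseteq> M\<close> in auto)
qed

lemma EFX_exists_shared_three_cheapest:
  assumes finM: "finite M" and finN: "finite N" and ij: "i \<in> N" "j \<in> N" "i \<noteq> j"
    and card_M: "card M = card N + 2"
    and costs: "admissible_costs N M c"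
    and W_i: "cheapest (c i) M W" and W'_i: "cheapest (c i) M W'"
    and W_j: "cheapest (c j) M W"
    and "W \<subseteq> W'" "card W = 3" "card W' = 4"
  shows "\<exists>X. is_allocation N M X \<and> EFX N c X"
proof -
  have WM: "W \<subseteq> M" "W' \<subseteq> M" using W_i W'_i by (simp_all add: cheapest_def)
  then have finW: "finite W" "finite W'" using finM by (auto intro: finite_subset)
  then have "card (W' - W) = 1"
    using \<open>W \<subseteq> W'\<close> \<open>card W = 3\<close> \<open>card W' = 4\<close> by (simp add: card_Diff_subset)
  then obtain a where "W' - W = {a}" by (auto simp: card_1_singleton_iff)
  then have W': "W' = insert a W" and "a \<notin> W" using \<open>W \<subseteq> W'\<close> by auto
  show ?thesis
  proof (cases "\<forall>e\<in>W. \<forall>r\<in>M - W. c i (W - {e}) \<le> c i {r}")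
    case True
    have "card (M - W) = card N - 1"
      using card_M \<open>card W = 3\<close> WM finW by (simp add: card_Diff_subset)
    then show ?thesis by (rule EFX_exists_one_bundle[OF finM finN ij(1) WM(1) _ costs True])
  next
    case False
    then obtain e r where "e \<in> W" "r \<in> M - W" "c i {r} < c i (W - {e})"
      by (meson not_le)
    moreover have "c i {a} \<le> c i {r}"
      using W'_i \<open>r \<in> M - W\<close> unfolding W' cheapest_def by (cases "r = a") auto
    ultimately show ?thesis
      using EFX_exists_swap_fourth_cheapest[OF finM finN ij card_M costs W_i W'_i[unfolded W'] W_j
          \<open>a \<notin> W\<close> \<open>card W = 3\<close>]
      by simp
  qed
qed

lemma EFX_exists_distinct_three_cheapest:
  assumes finM: "finite M" and finN: "finite N" and ij: "i \<in> N" "j \<in> N" "i \<noteq> j"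
    and card_M: "card M = card N + 2"
    and costs: "admissible_costs N M c"
    and A: "cheapest (c i) M A2" "cheapest (c i) M A3" "card A2 = 2" "A2 \<subseteq> A3" "card A3 = 3"
    and B: "cheapest (c j) M B2" "cheapest (c j) M B3" "card B2 = 2" "B2 \<subseteq> B3" "card B3 = 3"
    and "A3 \<noteq> B3"
  shows "\<exists>X. is_allocation N M X \<and> EFX N c X"
proof -
  obtain P Q where PQ: "card P = 2" "card Q = 2" "P \<inter> Q = {}" "P \<union> Q \<subseteq> A3 \<union> B3"
    and "\<exists>D\<in>{A2, A3}. P \<subseteq> D \<and> D \<subseteq> P \<union> Q \<and> \<not> Q \<subseteq> D"
    and "\<exists>E\<in>{B2, B3}. Q \<subseteq> E \<and> E \<subseteq> P \<union> Q \<and> \<not> P \<subseteq> E"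
    by (rule disjoint_pairs_from_chains[OF A(3-5) B(3-5) \<open>A3 \<noteq> B3\<close>])
  from \<open>\<exists>D\<in>{A2, A3}. _\<close> obtain D
    where "D \<in> {A2, A3}" "P \<subseteq> D" "D \<subseteq> P \<union> Q" "\<not> Q \<subseteq> D"
    by blast
  with A(1,2) have D: "cheapest (c i) M D" "P \<subseteq> D" "D \<subseteq> P \<union> Q" "\<not> Q \<subseteq> D" by auto
  from \<open>\<exists>E\<in>{B2, B3}. _\<close> obtain E
    where "E \<in> {B2, B3}" "Q \<subseteq> E" "E \<subseteq> P \<union> Q" "\<not> P \<subseteq> E"
    by blast
  with B(1,2) have E: "cheapest (c j) M E" "Q \<subseteq> E" "E \<subseteq> Q \<union> P" "\<not> P \<subseteq> E" by auto
  have "P \<subseteq> M" "Q \<subseteq> M" using PQ(4) A(2) B(2) by (auto simp: cheapest_def)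
  have mono: "monotone_cost M (c i)" "monotone_cost M (c j)" using costs ij by auto
  show ?thesis
  proof (rule EFX_exists_two_pairs[OF finM finN ij card_M costs \<open>P \<subseteq> M\<close> \<open>Q \<subseteq> M\<close> PQ(1-3)])
    show "singletons_cheaper (c i) M P Q"
      by (rule singletons_cheaper_if_cheapest[OF mono(1) finM D \<open>Q \<subseteq> M\<close>])
    show "singletons_cheaper (c j) M Q P"
      by (rule singletons_cheaper_if_cheapest[OF mono(2) finM E \<open>P \<subseteq> M\<close>])
  qed
qed

lemma EFX_exists_card_plus_1:
  assumes finM: "finite M" and finN: "finite N" and "i \<in> N" and card_M: "card M = card N + 1"
    and costs: "admissible_costs N M c"
  shows "\<exists>X. is_allocation N M X \<and> EFX N c X"
proof -
  obtain T where T_cheap: "\<And>k. cheapest (c i) M (T k)"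
    and T_card: "\<And>k. k \<le> card M \<Longrightarrow> card (T k) = k"
    and "\<And>k l. k \<le> l \<Longrightarrow> T k \<subseteq> T l"
    by (fact cheapest_chain[OF finM, where f = "c i"])
  have "2 \<le> card M" using card_M \<open>i \<in> N\<close> finN by (auto simp: Suc_le_eq card_gt_0_iff)
  then have T: "cheapest (c i) M (T 2)" "card (T 2) = 2" using T_cheap T_card by auto
  then have "T 2 \<subseteq> M" by (simp add: cheapest_def)
  have "card (M - T 2) = card N - 1"
    using card_M T(2) \<open>T 2 \<subseteq> M\<close> finM by (simp add: card_Diff_subset finite_subset)
  then show ?thesis
  proof (rule EFX_exists_one_bundle[OF finM finN \<open>i \<in> N\<close> \<open>T 2 \<subseteq> M\<close> _ costs], intro ballI)
    fix e r assume "e \<in> T 2" "r \<in> M - T 2"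
    then obtain x where "x \<in> T 2" "T 2 - {e} = {x}" using card_2_Diff_singleton T(2) by metis
    then show "c i (T 2 - {e}) \<le> c i {r}" using T(1) \<open>r \<in> M - T 2\<close> by (simp add: cheapest_def)
  qed
qed

lemma EFX_exists_card_plus_2:
  assumes finM: "finite M" and finN: "finite N" and "2 \<le> card N" and card_M: "card M = card N + 2"
    and costs: "admissible_costs N M c"
  shows "\<exists>X. is_allocation N M X \<and> EFX N c X"
proof -
  obtain I where "I \<subseteq> N" "card I = 2" using obtain_subset_with_card_n[OF \<open>2 \<le> card N\<close>] by metis
  then obtain i j where ij: "i \<in> N" "j \<in> N" "i \<noteq> j" by (auto simp: card_2_iff)
  obtain A where A: "\<And>k. cheapest (c i) M (A k)" "\<And>k. k \<le> card M \<Longrightarrow> card (A k) = k"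
    "\<And>k l. k \<le> l \<Longrightarrow> A k \<subseteq> A l"
    by (fact cheapest_chain[OF finM, where f = "c i"])
  obtain B where B: "\<And>k. cheapest (c j) M (B k)" "\<And>k. k \<le> card M \<Longrightarrow> card (B k) = k"
    "\<And>k l. k \<le> l \<Longrightarrow> B k \<subseteq> B l"
    by (fact cheapest_chain[OF finM, where f = "c j"])
  have "4 \<le> card M" using card_M \<open>2 \<le> card N\<close> by linarith
  then have card: "card (A 2) = 2" "card (A 3) = 3" "card (A 4) = 4" "card (B 2) = 2" "card (B 3) = 3"
    using A(2) B(2) by auto
  have sub: "A 2 \<subseteq> A 3" "A 3 \<subseteq> A 4" "B 2 \<subseteq> B 3" by (simp_all add: A(3) B(3))
  show ?thesis
  proof (cases "A 3 = B 3")
    case True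
    then have "cheapest (c j) M (A 3)" using B(1) by simp
    then show ?thesis
      by (rule EFX_exists_shared_three_cheapest[OF finM finN ij card_M costs A(1)[of 3] A(1)[of 4]
            _ sub(2) card(2,3)])
  next
    case False
    then show ?thesis
      by (rule EFX_exists_distinct_three_cheapest[OF finM finN ij card_M costs A(1)[of 2] A(1)[of 3]
            card(1) sub(1) card(2) B(1)[of 2] B(1)[of 3] card(4) sub(3) card(5)])
  qed
qed

theorem theorem4:
  fixes n :: nat and M :: "'b set" and c :: "nat \<Rightarrow> 'b set \<Rightarrow> real"
  assumes "n \<ge> 1"
    and "finite M"
    and "card M \<le> n + 2"
    and "\<forall>i\<in>{1..n}. normalized_cost M (c i) \<and> monotone_cost M (c i) \<and> nonneg_cost M (c i)"
  shows "\<exists>X. is_allocation {1..n} M X \<and> EFX {1..n} c X"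
proof -
  have N: "finite {1..n}" "card {1..n} = n" "1 \<in> {1..n}" using assms(1) by auto
  consider "card M \<le> n" | "card M = n + 1" | "n = 1" "card M = n + 2" | "2 \<le> n" "card M = n + 2"
    using assms(1,3) by linarith
  then show ?thesis
  proof cases
    case 1
    then show ?thesis using EFX_exists_card_le[OF assms(2) N(1)] N(2) assms(4) by simp
  next
    case 2
    then show ?thesis using EFX_exists_card_plus_1[OF assms(2) N(1,3)] N(2) assms(4) by simp
  next
    case 3
    then show ?thesis using EFX_exists_one_bundle[OF assms(2) N(1,3), of M] assms(4) by simp
  next
    case 4
    then show ?thesis using EFX_exists_card_plus_2[OF assms(2) N(1)] N(2) assms(4) by simp
  qed
qed

end
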